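(* Let $w\geqslant2$ and $h=2^d$, $d\in\mathbb{N}$. Then $|\mathcal{H}_{h,w}|=w\cdot h$, where $\mathcal{H}_{h,w}$ is the set of fast Hough transform patterns on the $h\times w$ image.
   Context: Image: the set of pixels $p_{ij}$, $i=0,\dots,h-1$ (row, from the bottom), $j=0,\dots,w-1$ (column). A pattern is a nonempty set of pixels. For a pattern $T$ with exactly one pixel in each of its rows, $\Delta(T)=(j_{top}-j_{bot})\bmod w$ (column indices of topmost and bottommost pixels), $\mathit{tran}_{a,b}(T)=\{p_{i+a,\,(j+b)\bmod w}\mid p_{ij}\in T\}$. Define $\mathcal{H}_0=\{\{p_{0j}\}\mid j=0,\dots,w-1\}$, $\mathcal{H}_k=\{T\cup\mathit{tran}_{2^{k-1},\,\Delta(T)+s}(T)\mid T\in\mathcal{H}_{k-1},\ s\in\{0,1\}\}$ for $k=1,\dots,d$, and $\mathcal{H}_{h,w}=\mathcal{H}_d$ (as a set of distinct patterns). *)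

theory Defs
  imports Main
begin

text \<open>A pixel p_ij is the pair (i, j): row i (counted from the bottom), column j.
  A pattern is a set of pixels.\<close>
type_synonym pixel = "nat \<times> nat"
type_synonym pattern = "pixel set"

text \<open>Column index of the topmost / bottommost pixel of a pattern
  (meaningful for patterns with exactly one pixel in each of their rows).\<close>
definition top_col :: "pattern \<Rightarrow> nat" where
  "top_col T = (THE j. (Max (fst ` T), j) \<in> T)"

definition bot_col :: "pattern \<Rightarrow> nat" where
  "bot_col T = (THE j. (Min (fst ` T), j) \<in> T)"

definition Delta :: "nat \<Rightarrow> pattern \<Rightarrow> nat" where
  "Delta w T = nat ((int (top_col T) - int (bot_col T)) mod int w)"

definition tran :: "nat \<Rightarrow> nat \<Rightarrow> nat \<Rightarrow> pattern \<Rightarrow> pattern" where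
  "tran w a b T = (\<lambda>(i, j). (i + a, (j + b) mod w)) ` T"

fun fht :: "nat \<Rightarrow> nat \<Rightarrow> pattern set" where
  "fht w 0 = {{(0, j)} | j. j < w}"
| "fht w (Suc k) =
     {T \<union> tran w (2 ^ k) (Delta w T + s) T | T s. T \<in> fht w k \<and> s \<in> {0, 1}}"

end

theory Submission
  imports Defs
begin

text \<open>Every pattern of \<open>H_k\<close> is the graph of a column function on the rows
  \<open>0, \<dots>, 2^k - 1\<close>. The merged pattern \<open>T \<union> tran_{2^k,b}(T)\<close> remembers \<open>T\<close> in
  its lower half and the residue of \<open>b\<close> modulo \<open>w\<close> in row \<open>2^k\<close>; since \<open>w \<ge> 2\<close>,
  the shifts \<open>\<Delta>(T)\<close> and \<open>\<Delta>(T) + 1\<close> have different residues. Hence each doubling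
  step is injective on \<open>H_k \<times> {0, 1}\<close> and \<open>|H_{k+1}| = 2 |H_k|\<close>; the actual value
  of \<open>\<Delta>\<close> plays no role.\<close>

definition graph :: "nat \<Rightarrow> (nat \<Rightarrow> nat) \<Rightarrow> pattern" where
  "graph n f = (\<lambda>i. (i, f i)) ` {..<n}"

lemma graph_eq_iff: "graph n f = graph n g \<longleftrightarrow> (\<forall>i<n. f i = g i)"
  unfolding graph_def by (auto simp: image_iff)

lemma tran_graph:
  "tran w n b (graph n f) = (\<lambda>i. (i, (f (i - n) + b) mod w)) ` {n..<2 * n}"
proof -
  have "{n..<2 * n} = (\<lambda>i. i + n) ` {..<n}"
  proof (intro equalityI subsetI)
    fix x assume "x \<in> {n..<2 * n}"
    then show "x \<in> (\<lambda>i. i + n) ` {..<n}" by (intro image_eqI[of _ _ "x - n"]) auto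
  qed auto
  then show ?thesis
    unfolding tran_def graph_def by (auto simp: image_image)
qed

lemma graph_Un_tran:
  "graph n f \<union> tran w n b (graph n f)
   = graph (2 * n) (\<lambda>i. if i < n then f i else (f (i - n) + b) mod w)"
  unfolding tran_graph unfolding graph_def by (auto simp: image_iff)

lemma graph_Un_tran_inj:
  assumes "0 < n"
    and "graph n f \<union> tran w n b (graph n f) = graph n g \<union> tran w n c (graph n g)"
  shows "graph n f = graph n g" and "b mod w = c mod w"
proof -
  let ?f' = "\<lambda>i. if i < n then f i else (f (i - n) + b) mod w"
  let ?g' = "\<lambda>i. if i < n then g i else (g (i - n) + c) mod w"
  have agree: "\<forall>i<2 * n. ?f' i = ?g' i"
    using assms(2) by (simp only: graph_Un_tran graph_eq_iff)
  then have lower: "\<forall>i<n. f i = g i"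
    by (metis less_trans_Suc mult_2 trans_less_add1)
  have "?f' n = ?g' n"
    by (rule agree[rule_format]) (use assms(1) in simp)
  then have row_n: "(f 0 + b) mod w = (g 0 + c) mod w"
    by simp
  show "graph n f = graph n g"
    using lower by (simp add: graph_eq_iff)
  show "b mod w = c mod w"
    using row_n lower assms(1) by (simp add: nat_mod_eq_iff)
qed

lemma fht_graph: "T \<in> fht w k \<Longrightarrow> \<exists>f. T = graph (2 ^ k) f"
proof (induction k arbitrary: T)
  case 0
  then obtain j where "T = {(0, j)}" by auto
  then have "T = graph (2 ^ 0) (\<lambda>_. j)" unfolding graph_def by auto
  then show ?case by blast
next
  case (Suc k)
  then obtain T' s where "T' \<in> fht w k" and T: "T = T' \<union> tran w (2 ^ k) (Delta w T' + s) T'"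
    by auto
  then obtain f where "T' = graph (2 ^ k) f" using Suc.IH by blast
  then show ?case unfolding T by (auto simp: graph_Un_tran)
qed

lemma fht_Suc_image:
  "fht w (Suc k) = (\<lambda>(T, s). T \<union> tran w (2 ^ k) (Delta w T + s) T) ` (fht w k \<times> {0, 1})"
  by auto

lemma fht_step_inj:
  assumes "w \<ge> 2"
  shows "inj_on (\<lambda>(T, s). T \<union> tran w (2 ^ k) (Delta w T + s) T) (fht w k \<times> {0, 1})"
proof (rule inj_onI, clarify)
  fix T1 T2 :: pattern and s1 s2 :: nat
  assume T: "T1 \<in> fht w k" "T2 \<in> fht w k" and s: "s1 \<in> {0, 1}" "s2 \<in> {0, 1}"
    and eq: "T1 \<union> tran w (2 ^ k) (Delta w T1 + s1) T1 = T2 \<union> tran w (2 ^ k) (Delta w T2 + s2) T2"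
  obtain f1 f2 where "T1 = graph (2 ^ k) f1" "T2 = graph (2 ^ k) f2"
    using fht_graph T by blast
  with eq have "T1 = T2" and "(Delta w T1 + s1) mod w = (Delta w T2 + s2) mod w"
    using graph_Un_tran_inj[of "2 ^ k" f1 w _ f2] by auto
  moreover have "(x + 1) mod w \<noteq> x mod w" for x
    using assms by (simp add: mod_Suc)
  ultimately show "T1 = T2 \<and> s1 = s2"
    using s by (metis add.right_neutral empty_iff insert_iff)
qed

theorem proposition6:
  fixes w h d :: nat
  assumes "w \<ge> 2" and "h = 2 ^ d"
  shows "card (fht w d) = w * h"
  unfolding assms(2)
proof (induction d)
  case 0
  have "fht w 0 = (\<lambda>j. {(0, j)}) ` {..<w}" by auto
  moreover have "inj_on (\<lambda>j. {(0::nat, j)}) {..<w}" by (auto simp: inj_on_def)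
  ultimately show ?case by (simp add: card_image)
next
  case (Suc d)
  have "card (fht w (Suc d)) = card (fht w d \<times> {0, 1::nat})"
    unfolding fht_Suc_image by (rule card_image[OF fht_step_inj[OF assms(1)]])
  also have "\<dots> = 2 * card (fht w d)" by (simp add: card_cartesian_product)
  finally show ?case using Suc.IH by simp
qed

end
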